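(* Let $S$ be a finite-dimensional operator system with $S^{sa}=S^+-S^+$. Then $S$ contains a matrix order unit: there is $e\in S^+$ such that for every $n\ge1$ and every $X\in M_n(S)^{sa}$ there is $\lambda>0$ with $\lambda(1_n\otimes e)\pm X\ge0$ in $M_n(S)$.
   Context: An operator system here is a (possibly nonunital) norm-closed selfadjoint subspace $S\subseteq B(H)$ for a Hilbert space $H$, with $M_n(S)^+=M_n(S)\cap B(H^n)^+$; $1_n\otimes e$ is the diagonal matrix with $e$ in each diagonal entry. *)

theory Defs
  imports "HOL-Analysis.Analysis"
begin

class chilbert = ab_group_add +
  fixes cscale :: "complex \<Rightarrow> 'a \<Rightarrow> 'a"
    and cinner :: "'a \<Rightarrow> 'a \<Rightarrow> complex"
  assumes cscale_add_right: "cscale a (x + y) = cscale a x + cscale a y"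
    and cscale_add_left: "cscale (a + b) x = cscale a x + cscale b x"
    and cscale_cscale: "cscale a (cscale b x) = cscale (a * b) x"
    and cscale_one: "cscale 1 x = x"
    and cinner_add_left: "cinner (x + y) z = cinner x z + cinner y z"
    and cinner_cscale_left: "cinner (cscale a x) y = a * cinner x y"
    and cinner_conj: "cinner y x = cnj (cinner x y)"
    and cinner_self_nonneg: "Im (cinner x x) = 0 \<and> Re (cinner x x) \<ge> 0"
    and cinner_self_eq_0: "cinner x x = 0 \<longleftrightarrow> x = 0"
    and complete:
      "(\<forall>e>0. \<exists>N::nat. \<forall>m\<ge>N. \<forall>n\<ge>N. sqrt (Re (cinner (X m - X n) (X m - X n))) < e)
       \<Longrightarrow> (\<exists>L. \<forall>e>0. \<exists>N::nat. \<forall>n\<ge>N. sqrt (Re (cinner (X n - L) (X n - L))) < e)"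

definition cnorm :: "'h::chilbert \<Rightarrow> real" where
  "cnorm x = sqrt (Re (cinner x x))"

definition bounded_op :: "('h::chilbert \<Rightarrow> 'h) \<Rightarrow> bool" where
  "bounded_op T \<longleftrightarrow>
     (\<forall>x y. T (x + y) = T x + T y) \<and> (\<forall>c x. T (cscale c x) = cscale c (T x)) \<and>
     (\<exists>K. \<forall>x. cnorm (T x) \<le> K * cnorm x)"

definition pos_op :: "('h::chilbert \<Rightarrow> 'h) \<Rightarrow> bool" where
  "pos_op T \<longleftrightarrow> (\<forall>x. Im (cinner (T x) x) = 0 \<and> Re (cinner (T x) x) \<ge> 0)"

definition sa_op :: "('h::chilbert \<Rightarrow> 'h) \<Rightarrow> bool" where
  "sa_op T \<longleftrightarrow> (\<forall>x y. cinner (T x) y = cinner x (T y))"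

definition norm_closed :: "('h::chilbert \<Rightarrow> 'h) set \<Rightarrow> bool" where
  "norm_closed S \<longleftrightarrow>
     (\<forall>(Ts :: nat \<Rightarrow> 'h \<Rightarrow> 'h) T. (\<forall>k. Ts k \<in> S) \<and> bounded_op T \<and>
        (\<forall>e>0. \<exists>N. \<forall>k\<ge>N. \<forall>x. cnorm (Ts k x - T x) \<le> e * cnorm x) \<longrightarrow> T \<in> S)"

text \<open>A (possibly nonunital) operator system: a norm-closed selfadjoint subspace of B(H).\<close>
definition operator_system :: "('h::chilbert \<Rightarrow> 'h) set \<Rightarrow> bool" where
  "operator_system S \<longleftrightarrow>
     (\<forall>T\<in>S. bounded_op T) \<and>
     (\<lambda>x. 0) \<in> S \<and>
     (\<forall>T\<in>S. \<forall>U\<in>S. (\<lambda>x. T x + U x) \<in> S) \<and>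
     (\<forall>c. \<forall>T\<in>S. (\<lambda>x. cscale c (T x)) \<in> S) \<and>
     (\<forall>T\<in>S. \<exists>T'\<in>S. \<forall>x y. cinner (T x) y = cinner x (T' y)) \<and>
     norm_closed S"

definition fin_dim_op :: "('h::chilbert \<Rightarrow> 'h) set \<Rightarrow> bool" where
  "fin_dim_op S \<longleftrightarrow>
     (\<exists>B. finite B \<and> B \<subseteq> S \<and> S = {(\<lambda>x. \<Sum>b\<in>B. cscale (c b) (b x)) | c. True})"

definition S_pos :: "('h::chilbert \<Rightarrow> 'h) set \<Rightarrow> ('h \<Rightarrow> 'h) set" where
  "S_pos S = {T \<in> S. pos_op T}"

definition S_sa :: "('h::chilbert \<Rightarrow> 'h) set \<Rightarrow> ('h \<Rightarrow> 'h) set" where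
  "S_sa S = {T \<in> S. sa_op T}"

text \<open>An n \<times> n matrix is X :: nat \<Rightarrow> nat \<Rightarrow> (H \<Rightarrow> H), entries X i j for i, j < n.\<close>
definition Mn :: "nat \<Rightarrow> ('h::chilbert \<Rightarrow> 'h) set \<Rightarrow> (nat \<Rightarrow> nat \<Rightarrow> ('h \<Rightarrow> 'h)) set" where
  "Mn n S = {X. \<forall>i<n. \<forall>j<n. X i j \<in> S}"

definition mat_pos :: "nat \<Rightarrow> (nat \<Rightarrow> nat \<Rightarrow> ('h::chilbert \<Rightarrow> 'h)) \<Rightarrow> bool" where
  "mat_pos n X \<longleftrightarrow>
     (\<forall>\<xi> :: nat \<Rightarrow> 'h. Im (\<Sum>i<n. \<Sum>j<n. cinner (X i j (\<xi> j)) (\<xi> i)) = 0 \<and>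
                      Re (\<Sum>i<n. \<Sum>j<n. cinner (X i j (\<xi> j)) (\<xi> i)) \<ge> 0)"

definition mat_sa :: "nat \<Rightarrow> (nat \<Rightarrow> nat \<Rightarrow> ('h::chilbert \<Rightarrow> 'h)) \<Rightarrow> bool" where
  "mat_sa n X \<longleftrightarrow> (\<forall>i<n. \<forall>j<n. \<forall>x y. cinner (X i j x) y = cinner x (X j i y))"

definition Mn_pos :: "nat \<Rightarrow> ('h::chilbert \<Rightarrow> 'h) set \<Rightarrow> (nat \<Rightarrow> nat \<Rightarrow> ('h \<Rightarrow> 'h)) set" where
  "Mn_pos n S = {X \<in> Mn n S. mat_pos n X}"

definition Mn_sa :: "nat \<Rightarrow> ('h::chilbert \<Rightarrow> 'h) set \<Rightarrow> (nat \<Rightarrow> nat \<Rightarrow> ('h \<Rightarrow> 'h)) set" where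
  "Mn_sa n S = {X \<in> Mn n S. mat_sa n X}"

definition diag_op :: "('h::chilbert \<Rightarrow> 'h) \<Rightarrow> nat \<Rightarrow> nat \<Rightarrow> ('h \<Rightarrow> 'h)" where
  "diag_op e = (\<lambda>i j. if i = j then e else (\<lambda>x. 0))"

definition mat_add :: "(nat \<Rightarrow> nat \<Rightarrow> ('h::chilbert \<Rightarrow> 'h)) \<Rightarrow> (nat \<Rightarrow> nat \<Rightarrow> ('h \<Rightarrow> 'h)) \<Rightarrow> nat \<Rightarrow> nat \<Rightarrow> ('h \<Rightarrow> 'h)" where
  "mat_add X Y = (\<lambda>i j x. X i j x + Y i j x)"

definition mat_scale :: "complex \<Rightarrow> (nat \<Rightarrow> nat \<Rightarrow> ('h::chilbert \<Rightarrow> 'h)) \<Rightarrow> nat \<Rightarrow> nat \<Rightarrow> ('h \<Rightarrow> 'h)" where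
  "mat_scale c X = (\<lambda>i j x. cscale c (X i j x))"

end

theory Submission
  imports Defs
begin

text \<open>Since \<open>S\<^sup>s\<^sup>a = S\<^sup>+ - S\<^sup>+\<close>, every element of \<open>S\<close> is a combination of four
positive elements, so the finite-dimensional \<open>S\<close> is spanned by finitely many positive
\<open>Q\<^sub>f\<close>, and \<open>e = \<Sum>\<^sub>f Q\<^sub>f\<close> is positive. Write a selfadjoint \<open>X \<in> M\<^sub>n(S)\<close> as
\<open>X\<^sub>i\<^sub>j = \<Sum>\<^sub>f \<gamma>\<^sub>i\<^sub>j\<^sub>f Q\<^sub>f\<close> with all \<open>|\<gamma>\<^sub>i\<^sub>j\<^sub>f| \<le> M\<close>. For positive \<open>Q\<close> one has
\<open>2 |\<langle>Q a, b\<rangle>| \<le> \<langle>Q a, a\<rangle> + \<langle>Q b, b\<rangle>\<close>, which bounds \<open>|\<langle>X \<xi>, \<xi>\<rangle>|\<close> by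
\<open>n M \<Sum>\<^sub>i \<langle>e \<xi>\<^sub>i, \<xi>\<^sub>i\<rangle>\<close>; hence \<open>\<lambda> = n M + 1\<close> makes both \<open>\<lambda> (1\<^sub>n \<otimes> e) \<plusminus> X\<close>
positive.\<close>

lemma cscale_zero_right [simp]: "cscale a (0::'a::chilbert) = 0"
proof -
  have "cscale a 0 + cscale a 0 = cscale a (0::'a) + 0"
    using cscale_add_right[of a "0::'a" 0] by simp
  then show ?thesis by simp
qed

lemma cscale_zero_left [simp]: "cscale 0 (x::'a::chilbert) = 0"
proof -
  have "cscale 0 x + cscale 0 x = cscale 0 x + 0"
    using cscale_add_left[of 0 0 x] by simp
  then show ?thesis by simp
qed

lemma cscale_minus_right: "cscale a (- x) = - cscale a (x::'a::chilbert)"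
  by (metis add_eq_0_iff cscale_add_right cscale_zero_right right_minus)

lemma cscale_minus_left: "cscale (- a) x = - cscale a (x::'a::chilbert)"
  by (metis add_eq_0_iff cscale_add_left cscale_zero_left right_minus)

lemma cscale_diff_right: "cscale a (x - y) = cscale a x - cscale a (y::'a::chilbert)"
  by (metis diff_conv_add_uminus cscale_add_right cscale_minus_right)

lemma cscale_sum_right: "cscale a (sum f A) = (\<Sum>i\<in>A. cscale a (f i :: 'a::chilbert))"
  by (induction A rule: infinite_finite_induct) (auto simp: cscale_add_right)

lemma cinner_zero_left [simp]: "cinner (0::'a::chilbert) y = 0"
  using cinner_add_left[of "0::'a" 0 y] by simp

lemma cinner_add_right: "cinner x (y + z) = cinner x y + cinner (x::'a::chilbert) z"
  by (metis cinner_add_left cinner_conj complex_cnj_add)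

lemma cinner_cscale_right: "cinner x (cscale a y) = cnj a * cinner (x::'a::chilbert) y"
  by (metis cinner_cscale_left cinner_conj complex_cnj_mult)

lemma cinner_sum_left: "cinner (sum f A) y = (\<Sum>i\<in>A. cinner (f i :: 'a::chilbert) y)"
  by (induction A rule: infinite_finite_induct) (auto simp: cinner_add_left)

definition clinear_op :: "('h::chilbert \<Rightarrow> 'h) \<Rightarrow> bool" where
  "clinear_op T \<longleftrightarrow> (\<forall>x y. T (x + y) = T x + T y) \<and> (\<forall>c x. T (cscale c x) = cscale c (T x))"

lemma bounded_op_clinear_op: "bounded_op T \<Longrightarrow> clinear_op T"
  by (simp add: bounded_op_def clinear_op_def)

lemma clinear_opD:
  assumes "clinear_op T"
  shows clinear_op_add: "T (x + y) = T x + T y"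
    and clinear_op_cscale: "T (cscale c x) = cscale c (T x)"
  using assms by (simp_all add: clinear_op_def)

text \<open>Polarization: the forms at \<open>x + y\<close> and \<open>x + \<i> y\<close> are real.\<close>
lemma pos_op_cinner_swap:
  assumes pos: "pos_op P" and lin: "clinear_op P"
  shows "cinner (P y) x = cnj (cinner (P x) y)"
proof -
  define u where "u = cinner (P x) y"
  define v where "v = cinner (P y) x"
  have Im_form: "Im (cinner (P z) z) = 0" for z
    using pos unfolding pos_op_def by blast
  have "cinner (P (x + y)) (x + y) = cinner (P x) x + u + v + cinner (P y) y"
    by (simp add: clinear_op_add[OF lin] cinner_add_left cinner_add_right u_def v_def)
  then have Im_sum: "Im u + Im v = 0"
    using Im_form[of "x + y"] Im_form[of x] Im_form[of y] by simp
  have "cinner (P (x + cscale \<i> y)) (x + cscale \<i> y) = cinner (P x) x - \<i> * u + \<i> * v + cinner (P y) y"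
    by (simp add: clinear_opD[OF lin] cinner_add_left cinner_add_right cinner_cscale_left
        cinner_cscale_right u_def v_def algebra_simps)
  then have Re_diff: "Re v - Re u = 0"
    using Im_form[of "x + cscale \<i> y"] Im_form[of x] Im_form[of y] by simp
  from Im_sum Re_diff have "v = cnj u" by (simp add: complex_eq_iff)
  then show ?thesis by (simp add: u_def v_def)
qed

text \<open>Expand \<open>\<langle>P (a - w b), a - w b\<rangle> \<ge> 0\<close> with \<open>w\<close> the phase of \<open>\<langle>P a, b\<rangle>\<close>.\<close>
lemma pos_op_cinner_le:
  assumes pos: "pos_op P" and lin: "clinear_op P"
  shows "2 * cmod (cinner (P a) b) \<le> Re (cinner (P a) a) + Re (cinner (P b) b)"
proof (cases "cinner (P a) b = 0")
  case True
  then show ?thesis using pos unfolding pos_op_def by (simp add: add_nonneg_nonneg)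
next
  case False
  define u where "u = cinner (P a) b"
  define w where "w = u / of_real (cmod u)"
  have swap: "cinner (P b) a = cnj u"
    unfolding u_def by (rule pos_op_cinner_swap[OF pos lin])
  have norm_sq: "u * cnj u = (of_real (cmod u))\<^sup>2"
    by (metis complex_norm_square of_real_power)
  have "(of_real (cmod u) :: complex) \<noteq> 0"
    using False u_def by simp
  with norm_sq have phase: "cnj w * u = of_real (cmod u)" "w * cnj u = of_real (cmod u)" "w * cnj w = 1"
    unfolding w_def by (simp_all add: field_simps power2_eq_square mult.commute)
  have "cinner (P (a + cscale (- w) b)) (a + cscale (- w) b)
      = cinner (P a) a - cnj w * u - w * cnj u + w * cnj w * cinner (P b) b"
    by (simp add: clinear_opD[OF lin] cinner_add_left cinner_add_right cinner_cscale_left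
        cinner_cscale_right swap u_def[symmetric] algebra_simps)
  moreover have "Re (cinner (P (a + cscale (- w) b)) (a + cscale (- w) b)) \<ge> 0"
    using pos unfolding pos_op_def by blast
  ultimately show ?thesis
    unfolding u_def[symmetric] phase by simp
qed

lemma operator_system_closed:
  assumes "operator_system S"
  shows operator_system_zero: "(\<lambda>x. 0) \<in> S"
    and operator_system_add: "T \<in> S \<Longrightarrow> U \<in> S \<Longrightarrow> (\<lambda>x. T x + U x) \<in> S"
    and operator_system_cscale: "T \<in> S \<Longrightarrow> (\<lambda>x. cscale c (T x)) \<in> S"
  using assms unfolding operator_system_def by blast+

lemma operator_system_sum:
  assumes "operator_system S" and "\<And>f. f \<in> A \<Longrightarrow> Q f \<in> S"
  shows "(\<lambda>x. \<Sum>f\<in>A. Q f x) \<in> S"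
  using assms(2)
proof (induction A rule: infinite_finite_induct)
  case (insert a A)
  then show ?case
    using operator_system_add[OF assms(1), of "Q a" "\<lambda>x. \<Sum>f\<in>A. Q f x"] by simp
qed (simp_all add: operator_system_zero[OF assms(1)])

lemma operator_system_cartesian_decomp:
  assumes os: "operator_system S" and T: "T \<in> S"
  obtains H K where "H \<in> S_sa S" "K \<in> S_sa S" "\<And>x. T x = H x + cscale \<i> (K x)"
proof -
  obtain T' where T'S: "T' \<in> S" and adj: "\<And>x y. cinner (T x) y = cinner x (T' y)"
    using os T unfolding operator_system_def by blast
  have adj': "cinner (T' x) y = cinner x (T y)" for x y
    by (metis adj cinner_conj)
  define H where "H = (\<lambda>x. cscale (1/2) (T x + T' x))"
  define K where "K = (\<lambda>x. cscale (-\<i>/2) (T x + cscale (-1) (T' x)))"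
  have "H \<in> S" "K \<in> S"
    unfolding H_def K_def using T T'S by (intro operator_system_closed[OF os]; simp)+
  moreover have "sa_op H" "sa_op K"
    unfolding sa_op_def H_def K_def
    by (simp_all add: cinner_add_left cinner_add_right cinner_cscale_left cinner_cscale_right
        adj adj' algebra_simps)
  ultimately have "H \<in> S_sa S" "K \<in> S_sa S"
    unfolding S_sa_def by blast+
  moreover have "T x = H x + cscale \<i> (K x)" for x
  proof -
    have "H x + cscale \<i> (K x) = cscale (1/2 + 1/2) (T x) + cscale (1/2 + - 1/2) (T' x)"
      unfolding H_def K_def cscale_add_left cscale_add_right cscale_cscale by (simp add: add_ac)
    then show ?thesis by (simp add: cscale_one)
  qed
  ultimately show ?thesis by (rule that)
qed

text \<open>Writing \<open>T = H + \<i> K\<close> and \<open>H = P\<^sub>0 - P\<^sub>2\<close>, \<open>K = P\<^sub>1 - P\<^sub>3\<close> gives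
  \<open>T = \<Sum>k<4. \<i>\<^sup>k P\<^sub>k\<close>.\<close>
lemma operator_system_pos_decomp:
  assumes os: "operator_system S"
    and sa: "S_sa S = {(\<lambda>x. P x - Q x) | P Q. P \<in> S_pos S \<and> Q \<in> S_pos S}"
    and T: "T \<in> S"
  obtains P where "\<And>k. k < 4 \<Longrightarrow> P k \<in> S_pos S"
    and "\<And>x. T x = (\<Sum>k<4. cscale (\<i> ^ k) (P k x))"
proof -
  obtain H K where "H \<in> S_sa S" "K \<in> S_sa S" and TH: "\<And>x. T x = H x + cscale \<i> (K x)"
    using operator_system_cartesian_decomp[OF os T] by blast
  then obtain P0 P1 P2 P3 where pos: "P0 \<in> S_pos S" "P1 \<in> S_pos S" "P2 \<in> S_pos S" "P3 \<in> S_pos S"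
    and "H = (\<lambda>x. P0 x - P2 x)" "K = (\<lambda>x. P1 x - P3 x)"
    unfolding sa by blast
  with TH have "T x = (\<Sum>k<4. cscale (\<i> ^ k) (([P0, P1, P2, P3] ! k) x))" for x
    by (simp add: eval_nat_numeral cscale_one cscale_minus_left cscale_diff_right)
  moreover have "[P0, P1, P2, P3] ! k \<in> S_pos S" if "k < 4" for k
    using pos that by (auto simp: less_Suc_eq numeral_eq_Suc)
  ultimately show ?thesis using that by blast
qed

lemma fin_dim_op_pos_spanning:
  fixes S :: "('h::chilbert \<Rightarrow> 'h) set"
  assumes os: "operator_system S" and fd: "fin_dim_op S"
    and sa: "S_sa S = {(\<lambda>x. P x - Q x) | P Q. P \<in> S_pos S \<and> Q \<in> S_pos S}"
  obtains F :: "(('h \<Rightarrow> 'h) \<times> nat) set" and Q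
  where "finite F" "\<And>f. f \<in> F \<Longrightarrow> Q f \<in> S_pos S"
    and "\<And>T. T \<in> S \<Longrightarrow> \<exists>\<gamma>. \<forall>x. T x = (\<Sum>f\<in>F. cscale (\<gamma> f) (Q f x))"
proof -
  obtain B where B: "finite B" "B \<subseteq> S" "S = {(\<lambda>x. \<Sum>b\<in>B. cscale (c b) (b x)) | c. True}"
    using fd unfolding fin_dim_op_def by blast
  have "\<forall>b\<in>B. \<exists>Pb. (\<forall>k<4. Pb k \<in> S_pos S) \<and> (\<forall>x. b x = (\<Sum>k<4. cscale (\<i> ^ k) (Pb k x)))"
    using B(2) operator_system_pos_decomp[OF os sa] by (metis subsetD)
  then obtain P where pos: "\<And>b k. b \<in> B \<Longrightarrow> k < 4 \<Longrightarrow> P b k \<in> S_pos S"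
    and decomp: "\<And>b x. b \<in> B \<Longrightarrow> b x = (\<Sum>k<4. cscale (\<i> ^ k) (P b k x))"
    by metis
  have "\<exists>\<gamma>. \<forall>x. T x = (\<Sum>f\<in>B \<times> {..<4}. cscale (\<gamma> f) (case_prod P f x))" if "T \<in> S" for T
  proof -
    from that B(3) obtain c where c: "T = (\<lambda>x. \<Sum>b\<in>B. cscale (c b) (b x))"
      by blast
    have "T x = (\<Sum>f\<in>B \<times> {..<4}. cscale (c (fst f) * \<i> ^ snd f) (case_prod P f x))" for x
    proof -
      have "T x = (\<Sum>b\<in>B. cscale (c b) (\<Sum>k<4. cscale (\<i> ^ k) (P b k x)))"
        unfolding c using decomp by simp
      also have "\<dots> = (\<Sum>b\<in>B. \<Sum>k<4. cscale (c b * \<i> ^ k) (P b k x))"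
        by (simp add: cscale_sum_right cscale_cscale)
      finally show ?thesis
        by (simp add: sum.cartesian_product split_def)
    qed
    then show ?thesis
      by (intro exI[of _ "\<lambda>f. c (fst f) * \<i> ^ snd f"]) blast
  qed
  with B(1) pos show ?thesis
    using that[of "B \<times> {..<4}" "case_prod P"] by auto
qed

definition mat_form :: "nat \<Rightarrow> (nat \<Rightarrow> nat \<Rightarrow> ('h::chilbert \<Rightarrow> 'h)) \<Rightarrow> (nat \<Rightarrow> 'h) \<Rightarrow> complex" where
  "mat_form n X \<xi> = (\<Sum>i<n. \<Sum>j<n. cinner (X i j (\<xi> j)) (\<xi> i))"

lemma mat_pos_iff_mat_form:
  "mat_pos n X \<longleftrightarrow> (\<forall>\<xi>. Im (mat_form n X \<xi>) = 0 \<and> Re (mat_form n X \<xi>) \<ge> 0)"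
  by (simp add: mat_pos_def mat_form_def)

lemma mat_form_mat_add: "mat_form n (mat_add X Y) \<xi> = mat_form n X \<xi> + mat_form n Y \<xi>"
  by (simp add: mat_form_def mat_add_def cinner_add_left sum.distrib)

lemma mat_form_mat_scale: "mat_form n (mat_scale c X) \<xi> = c * mat_form n X \<xi>"
  by (simp add: mat_form_def mat_scale_def cinner_cscale_left sum_distrib_left)

lemma mat_form_diag_op: "mat_form n (diag_op e) \<xi> = (\<Sum>i<n. cinner (e (\<xi> i)) (\<xi> i))"
  by (simp add: mat_form_def diag_op_def if_distribR if_distrib[of "\<lambda>x. cinner x _"] cong: if_cong)

lemma mat_form_mat_sa:
  assumes "mat_sa n X"
  shows "cnj (mat_form n X \<xi>) = mat_form n X \<xi>"
proof -
  have "cnj (mat_form n X \<xi>) = (\<Sum>i<n. \<Sum>j<n. cinner (\<xi> i) (X i j (\<xi> j)))"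
    unfolding mat_form_def by (simp add: cinner_conj[of "\<xi> _"])
  also have "\<dots> = (\<Sum>i<n. \<Sum>j<n. cinner (X j i (\<xi> i)) (\<xi> j))"
    using assms unfolding mat_sa_def by (intro sum.cong refl) auto
  also have "\<dots> = mat_form n X \<xi>"
    unfolding mat_form_def by (rule sum.swap)
  finally show ?thesis .
qed

lemma mat_form_diag_op_pos:
  assumes "pos_op e"
  shows "Im (mat_form n (diag_op e) \<xi>) = 0" and "Re (mat_form n (diag_op e) \<xi>) \<ge> 0"
  using assms unfolding mat_form_diag_op pos_op_def by (simp_all add: Im_sum Re_sum sum_nonneg)

lemma mat_pos_diag_op_shift:
  assumes e: "pos_op e" and X: "mat_sa n X" and "\<bar>s\<bar> \<le> 1"
    and bound: "\<And>\<xi>. cmod (mat_form n X \<xi>) \<le> lam * Re (mat_form n (diag_op e) \<xi>)"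
  shows "mat_pos n (mat_add (mat_scale (of_real lam) (diag_op e)) (mat_scale (of_real s) X))"
  unfolding mat_pos_iff_mat_form
proof
  fix \<xi>
  define E where "E = mat_form n (diag_op e) \<xi>"
  define q where "q = mat_form n X \<xi>"
  have "Im E = 0" unfolding E_def by (rule mat_form_diag_op_pos[OF e])
  moreover have "Im q = 0"
  proof -
    from mat_form_mat_sa[OF X, of \<xi>] have "Im (cnj q) = Im q"
      unfolding q_def by simp
    then show ?thesis by simp
  qed
  moreover have "\<bar>s * Re q\<bar> \<le> cmod q"
    unfolding abs_mult using \<open>\<bar>s\<bar> \<le> 1\<close> abs_Re_le_cmod[of q]
    by (meson abs_ge_zero mult_left_le_one_le order_trans)
  ultimately show "Im (mat_form n (mat_add (mat_scale (of_real lam) (diag_op e)) (mat_scale (of_real s) X)) \<xi>) = 0 \<and>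
      Re (mat_form n (mat_add (mat_scale (of_real lam) (diag_op e)) (mat_scale (of_real s) X)) \<xi>) \<ge> 0"
    using bound[of \<xi>]
    by (simp add: mat_form_mat_add mat_form_mat_scale E_def[symmetric] q_def[symmetric] abs_le_iff)
qed

lemma cmod_mat_form_le:
  fixes Q :: "'f \<Rightarrow> 'h::chilbert \<Rightarrow> 'h"
  assumes pos: "\<And>f. f \<in> F \<Longrightarrow> pos_op (Q f)" and lin: "\<And>f. f \<in> F \<Longrightarrow> clinear_op (Q f)"
    and X: "\<And>i j x. i < n \<Longrightarrow> j < n \<Longrightarrow> X i j x = (\<Sum>f\<in>F. cscale (\<gamma> i j f) (Q f x))"
    and M: "\<And>i j f. i < n \<Longrightarrow> j < n \<Longrightarrow> f \<in> F \<Longrightarrow> cmod (\<gamma> i j f) \<le> M"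
  shows "cmod (mat_form n X \<xi>) \<le> n * M * (\<Sum>i<n. \<Sum>f\<in>F. Re (cinner (Q f (\<xi> i)) (\<xi> i)))"
proof -
  define p where "p f i = Re (cinner (Q f (\<xi> i)) (\<xi> i))" for f i
  have p_nonneg: "p f i \<ge> 0" if "f \<in> F" for f i
    using pos[OF that] unfolding p_def pos_op_def by blast
  have "mat_form n X \<xi> = (\<Sum>i<n. \<Sum>j<n. \<Sum>f\<in>F. \<gamma> i j f * cinner (Q f (\<xi> j)) (\<xi> i))"
    unfolding mat_form_def using X by (simp add: cinner_sum_left cinner_cscale_left)
  then have "cmod (mat_form n X \<xi>)
      \<le> (\<Sum>i<n. \<Sum>j<n. \<Sum>f\<in>F. cmod (\<gamma> i j f) * cmod (cinner (Q f (\<xi> j)) (\<xi> i)))"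
    by (simp only: norm_mult[symmetric])
      (intro order_trans[OF norm_sum sum_mono] order_refl)
  also have "\<dots> \<le> (\<Sum>i<n. \<Sum>j<n. \<Sum>f\<in>F. M * ((p f j + p f i) / 2))"
  proof (intro sum_mono)
    fix i j f assume "i \<in> {..<n}" "j \<in> {..<n}" "f \<in> F"
    moreover have "cmod (cinner (Q f (\<xi> j)) (\<xi> i)) \<le> (p f j + p f i) / 2"
      using pos_op_cinner_le[OF pos lin, OF \<open>f \<in> F\<close> \<open>f \<in> F\<close>, of "\<xi> j" "\<xi> i"]
      unfolding p_def by simp
    ultimately show "cmod (\<gamma> i j f) * cmod (cinner (Q f (\<xi> j)) (\<xi> i)) \<le> M * ((p f j + p f i) / 2)"
      using M p_nonneg by (intro mult_mono') (auto simp: p_def)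
  qed
  also have "\<dots> = M / 2 * ((\<Sum>i<n. \<Sum>j<n. \<Sum>f\<in>F. p f j) + (\<Sum>i<n. \<Sum>j<n. \<Sum>f\<in>F. p f i))"
    by (simp add: sum.distrib sum_distrib_left add_divide_distrib algebra_simps)
  also have "\<dots> = n * M * (\<Sum>i<n. \<Sum>f\<in>F. p f i)"
    by (simp add: sum_distrib_left[symmetric] algebra_simps)
  finally show ?thesis unfolding p_def .
qed

lemma pos_op_sum:
  assumes "\<And>f. f \<in> A \<Longrightarrow> pos_op (Q f)"
  shows "pos_op (\<lambda>x. \<Sum>f\<in>A. Q f x)"
  using assms unfolding pos_op_def by (simp add: cinner_sum_left Im_sum Re_sum sum_nonneg)

lemma S_pos_sum:
  assumes "operator_system S" and "\<And>f. f \<in> A \<Longrightarrow> Q f \<in> S_pos S"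
  shows "(\<lambda>x. \<Sum>f\<in>A. Q f x) \<in> S_pos S"
  using assms operator_system_sum[OF assms(1), of A Q] pos_op_sum[of A Q] unfolding S_pos_def by auto

lemma ex_mat_pos_diag_op_shift:
  fixes Q :: "'f \<Rightarrow> 'h::chilbert \<Rightarrow> 'h"
  assumes "finite F" and pos: "\<And>f. f \<in> F \<Longrightarrow> pos_op (Q f)" and lin: "\<And>f. f \<in> F \<Longrightarrow> clinear_op (Q f)"
    and "mat_sa n X" and X: "\<And>i j x. i < n \<Longrightarrow> j < n \<Longrightarrow> X i j x = (\<Sum>f\<in>F. cscale (\<gamma> i j f) (Q f x))"
  shows "\<exists>lam>0. \<forall>s. \<bar>s\<bar> \<le> 1 \<longrightarrow>
    mat_pos n (mat_add (mat_scale (of_real lam) (diag_op (\<lambda>x. \<Sum>f\<in>F. Q f x))) (mat_scale (of_real s) X))"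
proof -
  define e where "e = (\<lambda>x. \<Sum>f\<in>F. Q f x)"
  have "pos_op e"
    unfolding e_def using pos by (rule pos_op_sum)
  define M where "M = (\<Sum>i<n. \<Sum>j<n. \<Sum>f\<in>F. cmod (\<gamma> i j f))"
  define lam where "lam = n * M + 1"
  have "n * M \<ge> 0"
    unfolding M_def by (simp add: sum_nonneg)
  then have "lam > 0" "n * M \<le> lam"
    unfolding lam_def by simp_all
  have M: "cmod (\<gamma> i j f) \<le> M" if "i < n" "j < n" "f \<in> F" for i j f
  proof -
    have "cmod (\<gamma> i j f) \<le> (\<Sum>f\<in>F. cmod (\<gamma> i j f))"
      using \<open>finite F\<close> that by (intro member_le_sum) auto
    also have "\<dots> \<le> (\<Sum>j<n. \<Sum>f\<in>F. cmod (\<gamma> i j f))"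
      using that by (intro member_le_sum) (auto simp: sum_nonneg)
    also have "\<dots> \<le> M"
      unfolding M_def using that by (intro member_le_sum) (auto simp: sum_nonneg)
    finally show ?thesis .
  qed
  have "cmod (mat_form n X \<xi>) \<le> lam * Re (mat_form n (diag_op e) \<xi>)" for \<xi>
  proof -
    have "Re (mat_form n (diag_op e) \<xi>) = (\<Sum>i<n. \<Sum>f\<in>F. Re (cinner (Q f (\<xi> i)) (\<xi> i)))"
      by (simp add: mat_form_diag_op e_def cinner_sum_left Re_sum)
    then have "cmod (mat_form n X \<xi>) \<le> n * M * Re (mat_form n (diag_op e) \<xi>)"
      using cmod_mat_form_le[OF pos lin X M] by simp
    also have "\<dots> \<le> lam * Re (mat_form n (diag_op e) \<xi>)"
      using \<open>n * M \<le> lam\<close> mat_form_diag_op_pos[OF \<open>pos_op e\<close>] by (intro mult_right_mono)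
    finally show ?thesis .
  qed
  with \<open>lam > 0\<close> show ?thesis
    unfolding e_def[symmetric] using mat_pos_diag_op_shift[OF \<open>pos_op e\<close> \<open>mat_sa n X\<close>] by blast
qed

lemma Mn_mat_add: "operator_system S \<Longrightarrow> X \<in> Mn n S \<Longrightarrow> Y \<in> Mn n S \<Longrightarrow> mat_add X Y \<in> Mn n S"
  by (simp add: Mn_def mat_add_def operator_system_add)

lemma Mn_mat_scale: "operator_system S \<Longrightarrow> X \<in> Mn n S \<Longrightarrow> mat_scale c X \<in> Mn n S"
  by (simp add: Mn_def mat_scale_def operator_system_cscale)

lemma Mn_diag_op: "operator_system S \<Longrightarrow> e \<in> S \<Longrightarrow> diag_op e \<in> Mn n S"
  by (simp add: Mn_def diag_op_def operator_system_zero)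

lemma mat_scale_one [simp]: "mat_scale 1 X = X"
  by (simp add: mat_scale_def cscale_one)

definition matrix_order_unit :: "('h::chilbert \<Rightarrow> 'h) set \<Rightarrow> ('h \<Rightarrow> 'h) \<Rightarrow> bool" where
  "matrix_order_unit S e \<longleftrightarrow> e \<in> S_pos S \<and>
     (\<forall>n\<ge>1. \<forall>X \<in> Mn_sa n S. \<exists>lam::real. lam > 0 \<and>
        mat_add (mat_scale (complex_of_real lam) (diag_op e)) X \<in> Mn_pos n S \<and>
        mat_add (mat_scale (complex_of_real lam) (diag_op e)) (mat_scale (-1) X) \<in> Mn_pos n S)"

lemma matrix_order_unit_sum_pos_spanning:
  fixes Q :: "'f \<Rightarrow> 'h::chilbert \<Rightarrow> 'h"
  assumes os: "operator_system S" and "finite F" and Q: "\<And>f. f \<in> F \<Longrightarrow> Q f \<in> S_pos S"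
    and span: "\<And>T. T \<in> S \<Longrightarrow> \<exists>\<gamma>. \<forall>x. T x = (\<Sum>f\<in>F. cscale (\<gamma> f) (Q f x))"
  shows "matrix_order_unit S (\<lambda>x. \<Sum>f\<in>F. Q f x)"
  unfolding matrix_order_unit_def
proof (intro conjI allI impI ballI)
  define e where "e = (\<lambda>x. \<Sum>f\<in>F. Q f x)"
  show e: "e \<in> S_pos S"
    unfolding e_def using os Q by (rule S_pos_sum)
  fix n :: nat and X
  assume "X \<in> Mn_sa n S"
  then have XS: "X \<in> Mn n S" and "mat_sa n X"
    unfolding Mn_sa_def by auto
  have Qpos: "pos_op (Q f)" and Qlin: "clinear_op (Q f)" if "f \<in> F" for f
    using Q[OF that] os bounded_op_clinear_op unfolding S_pos_def operator_system_def by blast+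
  obtain G where G: "\<And>T x. T \<in> S \<Longrightarrow> T x = (\<Sum>f\<in>F. cscale (G T f) (Q f x))"
    using span by metis
  have "X i j x = (\<Sum>f\<in>F. cscale (G (X i j) f) (Q f x))" if "i < n" "j < n" for i j x
    using G XS that unfolding Mn_def by blast
  from ex_mat_pos_diag_op_shift[OF \<open>finite F\<close> Qpos Qlin \<open>mat_sa n X\<close> this]
  obtain lam where "lam > 0"
    and pos: "\<And>s. \<bar>s\<bar> \<le> 1 \<Longrightarrow> mat_pos n (mat_add (mat_scale (of_real lam) (diag_op e)) (mat_scale (of_real s) X))"
    unfolding e_def by blast
  from pos[of 1] pos[of "-1"] show "\<exists>lam::real. lam > 0 \<and>
      mat_add (mat_scale (complex_of_real lam) (diag_op e)) X \<in> Mn_pos n S \<and>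
      mat_add (mat_scale (complex_of_real lam) (diag_op e)) (mat_scale (-1) X) \<in> Mn_pos n S"
    using \<open>lam > 0\<close> os e XS
    by (auto simp: Mn_pos_def S_pos_def intro!: exI[of _ lam] Mn_mat_add Mn_mat_scale Mn_diag_op)
qed

theorem lemma8p5:
  fixes S :: "('h::chilbert \<Rightarrow> 'h) set"
  assumes "operator_system S"
    and "fin_dim_op S"
    and "S_sa S = {(\<lambda>x. P x - Q x) | P Q. P \<in> S_pos S \<and> Q \<in> S_pos S}"
  shows "\<exists>e \<in> S_pos S. \<forall>n\<ge>1. \<forall>X \<in> Mn_sa n S. \<exists>lam::real. lam > 0 \<and>
           mat_add (mat_scale (complex_of_real lam) (diag_op e)) X \<in> Mn_pos n S \<and>
           mat_add (mat_scale (complex_of_real lam) (diag_op e)) (mat_scale (-1) X) \<in> Mn_pos n S"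
proof -
  obtain F :: "(('h \<Rightarrow> 'h) \<times> nat) set" and Q where "finite F" "\<And>f. f \<in> F \<Longrightarrow> Q f \<in> S_pos S"
    and "\<And>T. T \<in> S \<Longrightarrow> \<exists>\<gamma>. \<forall>x. T x = (\<Sum>f\<in>F. cscale (\<gamma> f) (Q f x))"
    using fin_dim_op_pos_spanning[OF assms] by blast
  then have "matrix_order_unit S (\<lambda>x. \<Sum>f\<in>F. Q f x)"
    using matrix_order_unit_sum_pos_spanning[OF assms(1)] by blast
  then show ?thesis
    unfolding matrix_order_unit_def by blast
qed

end
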